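(* Let $n\ge1$, $0<s<1$, $\Omega\subset\mathbb{R}^n$ a bounded open set, $f:\Omega\to\mathbb{R}$, and $u\in L^1_{2s}(\mathbb{R}^n)$ a viscosity supersolution of $(-\Delta)^s u\ge f$ in $\Omega$. If there is $x_0\in\Omega$ with $u(x_0)=\inf_{\mathbb{R}^n}u$, then \[ 2\int_{\mathbb{R}^n}\frac{u(x_0)-u(y)}{|x_0-y|^{n+2s}}\,dy\ge f(x_0). \]
   Context: $L^1_{2s}(\mathbb{R}^n)$: locally integrable $u$ with $\int\frac{|u|}{1+|x|^{n+2s}}<\infty$. A viscosity supersolution of $(-\Delta)^s u\ge f$ in $\Omega$ is $u$ upper semicontinuous in $\Omega$ such that for every $x\in\Omega$, every open neighbourhood $U\subset\Omega$ of $x$ and every $\phi\in C^2(U)$ with $\phi(x)=u(x)$ and $\phi<u$ in $U\setminus\{x\}$, setting $w=\phi$ in $U$, $w=u$ in $\mathbb{R}^n\setminus U$, one has $2\,\mathrm{P.V.}\int_{\mathbb{R}^n}\frac{w(x)-w(y)}{|x-y|^{n+2s}}dy\ge f(x)$. (The integral in the conclusion has non-positive integrand and may equal $-\infty$.) *)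

theory Defs
  imports "HOL-Analysis.Analysis"
begin

definition L1_2s :: "real \<Rightarrow> ('a::euclidean_space \<Rightarrow> real) \<Rightarrow> bool" where
  "L1_2s s u \<longleftrightarrow> u \<in> borel_measurable lebesgue \<and>
     (\<forall>K. compact K \<longrightarrow> set_integrable lebesgue K u) \<and>
     integrable lebesgue (\<lambda>x. \<bar>u x\<bar> / (1 + norm x powr (real DIM('a) + 2 * s)))"

definition usc_on :: "'a::topological_space set \<Rightarrow> ('a \<Rightarrow> real) \<Rightarrow> bool" where
  "usc_on \<Omega> u \<longleftrightarrow> (\<forall>x\<in>\<Omega>. \<forall>t. u x < t \<longrightarrow> (\<forall>\<^sub>F y in at x within \<Omega>. u y < t))"

definition C2_on :: "'a::euclidean_space set \<Rightarrow> ('a \<Rightarrow> real) \<Rightarrow> bool" where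
  "C2_on U \<phi> \<longleftrightarrow> (\<exists>(D :: 'a \<Rightarrow> 'a \<Rightarrow>\<^sub>L real) (D2 :: 'a \<Rightarrow> 'a \<Rightarrow>\<^sub>L ('a \<Rightarrow>\<^sub>L real)).
      (\<forall>x\<in>U. (\<phi> has_derivative blinfun_apply (D x)) (at x)) \<and>
      (\<forall>x\<in>U. (D has_derivative blinfun_apply (D2 x)) (at x)) \<and>
      continuous_on U D2)"

definition kern :: "real \<Rightarrow> 'a::euclidean_space \<Rightarrow> 'a \<Rightarrow> real" where
  "kern s x y = 1 / dist x y powr (real DIM('a) + 2 * s)"

definition trunc_pos :: "real \<Rightarrow> ('a::euclidean_space \<Rightarrow> real) \<Rightarrow> 'a \<Rightarrow> real \<Rightarrow> ennreal" where
  "trunc_pos s w x \<epsilon> = (\<integral>\<^sup>+ y. ennreal (max 0 ((w x - w y) * kern s x y)) * indicator {y. \<epsilon> < dist x y} y \<partial>lebesgue)"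

definition trunc_neg :: "real \<Rightarrow> ('a::euclidean_space \<Rightarrow> real) \<Rightarrow> 'a \<Rightarrow> real \<Rightarrow> ennreal" where
  "trunc_neg s w x \<epsilon> = (\<integral>\<^sup>+ y. ennreal (max 0 (- ((w x - w y) * kern s x y))) * indicator {y. \<epsilon> < dist x y} y \<partial>lebesgue)"

text \<open>\<open>2 P.V.\<integral> (w x - w y) K(x,y) dy \<ge> c\<close>: the truncated integrals are (eventually) well defined
  extended reals, converge in the extended reals as \<epsilon>\<rightarrow>0+, and twice the limit is \<ge> c.\<close>
definition pv_ge :: "real \<Rightarrow> ('a::euclidean_space \<Rightarrow> real) \<Rightarrow> 'a \<Rightarrow> real \<Rightarrow> bool" where
  "pv_ge s w x c \<longleftrightarrow> (\<exists>L::ereal.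
      (\<forall>\<^sub>F \<epsilon> in at_right 0. trunc_pos s w x \<epsilon> \<noteq> \<infinity> \<or> trunc_neg s w x \<epsilon> \<noteq> \<infinity>) \<and>
      ((\<lambda>\<epsilon>. enn2ereal (trunc_pos s w x \<epsilon>) - enn2ereal (trunc_neg s w x \<epsilon>)) \<longlongrightarrow> L) (at_right 0) \<and>
      ereal c \<le> 2 * L)"

definition visc_super :: "real \<Rightarrow> 'a::euclidean_space set \<Rightarrow> ('a \<Rightarrow> real) \<Rightarrow> ('a \<Rightarrow> real) \<Rightarrow> bool" where
  "visc_super s \<Omega> u f \<longleftrightarrow> usc_on \<Omega> u \<and>
     (\<forall>x\<in>\<Omega>. \<forall>U \<phi>. open U \<and> x \<in> U \<and> U \<subseteq> \<Omega> \<and> C2_on U \<phi> \<and> \<phi> x = u x \<and>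
        (\<forall>y\<in>U - {x}. \<phi> y < u y) \<longrightarrow>
        pv_ge s (\<lambda>y. if y \<in> U then \<phi> y else u y) x (f x))"

end

theory Submission
  imports Defs
begin

text \<open>Since \<open>u\<close> attains its global minimum at \<open>x0\<close>, for every ball \<open>B_r(x0) \<subseteq> \<Omega>\<close> with
  \<open>r \<le> 1\<close> and every \<open>e > 0\<close> the function \<open>\<phi>(y) = u(x0) - e |y - x0|^(2(n+1))\<close> touches \<open>u\<close> from
  below at \<open>x0\<close>, so the viscosity inequality holds for \<open>w\<close>, equal to \<open>\<phi>\<close> on the ball and to \<open>u\<close>
  outside. The factor \<open>|y - x0|^(2(n+1))\<close> cancels the singularity of the kernel, so the positive
  parts of the truncated integrals are at most \<open>e |B_1|\<close>, while for truncation radii below \<open>r\<close>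
  the negative part is exactly the tail integral of \<open>(u(y) - u(x0)) K(x0,y)\<close> outside \<open>B_r(x0)\<close>.
  Letting \<open>e \<rightarrow> 0\<close> bounds every tail by \<open>-f(x0)/2\<close>, and monotone convergence as \<open>r \<rightarrow> 0\<close>
  gives the claim.\<close>

lemma kern_self [simp]: "kern s x x = 0"
  by (simp add: kern_def)

lemma kern_nonneg [simp]: "0 \<le> kern s x y"
  by (simp add: kern_def)

lemma borel_measurable_kern [measurable]: "kern s x \<in> borel_measurable lebesgue"
proof -
  have "kern s x \<in> borel_measurable borel"
    unfolding kern_def by measurable
  then show ?thesis by (intro measurable_completion) simp
qed

lemma has_derivative_inner_self_power:
  fixes x0 :: "'a::real_inner"
  shows "((\<lambda>y. inner (y - x0) (y - x0) ^ k) has_derivative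
    (\<lambda>h. real k * inner (y - x0) (y - x0) ^ (k - 1) * (2 * inner (y - x0) h))) (at y)"
  by (auto intro!: derivative_eq_intros simp: inner_commute algebra_simps)

lemma C2_on_const_minus_inner_self_power:
  fixes x0 :: "'a::euclidean_space"
  assumes "2 \<le> k"
  shows "C2_on U (\<lambda>y. m - e * inner (y - x0) (y - x0) ^ k)"
proof -
  define c where "c y = - 2 * e * real k * inner (y - x0) (y - x0) ^ (k - 1)" for y
  define c' where "c' y = - 4 * e * real k * real (k - 1) * inner (y - x0) (y - x0) ^ (k - 2)" for y
  define D where "D y = c y *\<^sub>R blinfun_inner_right (y - x0)" for y
  define D2 :: "'a \<Rightarrow> 'a \<Rightarrow>\<^sub>L 'a \<Rightarrow>\<^sub>L real" where "D2 y = c y *\<^sub>R Blinfun blinfun_inner_right +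
    (blinfun_scaleR_left (blinfun_inner_right (y - x0)) o\<^sub>L (c' y *\<^sub>R blinfun_inner_right (y - x0)))" for y
  have D2_apply: "blinfun_apply (D2 y) h =
      c y *\<^sub>R blinfun_inner_right h + (c' y * inner (y - x0) h) *\<^sub>R blinfun_inner_right (y - x0)" for y h
    by (simp add: D2_def bounded_linear_Blinfun_apply bounded_linear_blinfun_inner_right
        blinfun.bilinear_simps)
  have "((\<lambda>y. m - e * inner (y - x0) (y - x0) ^ k) has_derivative blinfun_apply (D y)) (at y)" for y
    by (rule has_derivative_eq_rhs[OF has_derivative_diff[OF has_derivative_const
          has_derivative_mult_right[OF has_derivative_inner_self_power]]])
      (auto simp: fun_eq_iff D_def c_def blinfun.bilinear_simps algebra_simps)
  moreover have c_deriv: "(c has_derivative (\<lambda>h. c' y * inner (y - x0) h)) (at y)" for y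
    unfolding c_def
    by (rule has_derivative_eq_rhs[OF has_derivative_mult_right[OF has_derivative_inner_self_power]])
      (use assms in \<open>auto simp: fun_eq_iff c'_def algebra_simps numeral_2_eq_2\<close>)
  moreover have "(D has_derivative blinfun_apply (D2 y)) (at y)" for y
  proof -
    have "((\<lambda>y. blinfun_inner_right (y - x0)) has_derivative blinfun_inner_right) (at y)"
      by (rule has_derivative_eq_rhs[OF bounded_linear.has_derivative[OF bounded_linear_blinfun_inner_right]])
        (auto intro!: derivative_eq_intros)
    then show ?thesis
      unfolding D_def
      by (rule has_derivative_eq_rhs[OF has_derivative_scaleR[OF c_deriv]]) (auto simp: fun_eq_iff D2_apply)
  qed
  moreover have "continuous_on U D2"
  proof (rule continuous_on_blinfun_componentwise)
    fix h
    have "continuous_on U c"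
      by (rule continuous_at_imp_continuous_on) (auto intro: has_derivative_continuous[OF c_deriv])
    then show "continuous_on U (\<lambda>y. blinfun_apply (D2 y) h)"
      unfolding D2_apply c'_def by (intro continuous_intros)
  qed
  ultimately show ?thesis
    unfolding C2_on_def by blast
qed

lemma inner_self_power_kern_le_1:
  fixes x0 y :: "'a::euclidean_space"
  assumes "dist x0 y < 1" "s \<le> 1"
  shows "inner (y - x0) (y - x0) ^ (DIM('a) + 1) * kern s x0 y \<le> 1"
proof (cases "y = x0")
  case False
  define d where "d = dist x0 y"
  have d: "0 < d" "d < 1" using assms False by (auto simp: d_def)
  have "inner (y - x0) (y - x0) ^ (DIM('a) + 1) = d ^ (2 * (DIM('a) + 1))"
    by (simp add: d_def dist_norm norm_minus_commute power_mult power2_eq_square flip: power2_norm_eq_inner)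
  also have "\<dots> = d powr (real (2 * (DIM('a) + 1)))"
    using d by (simp only: powr_realpow)
  also have "\<dots> \<le> d powr (real DIM('a) + 2 * s)"
    by (rule powr_mono') (use d assms in auto)
  finally show ?thesis
    using d by (simp add: kern_def d_def[symmetric] divide_le_eq_1)
qed simp

definition tail_integral :: "real \<Rightarrow> ('a::euclidean_space \<Rightarrow> real) \<Rightarrow> 'a \<Rightarrow> real \<Rightarrow> ennreal" where
  "tail_integral s u x r =
     (\<integral>\<^sup>+ y. ennreal ((u y - u x) * kern s x y) * indicator (- ball x r) y \<partial>lebesgue)"

lemma pv_ge_le_of_eventually_bounds:
  assumes "pv_ge s w x c"
    and "\<forall>\<^sub>F \<epsilon> in at_right 0. trunc_pos s w x \<epsilon> \<le> A \<and> trunc_neg s w x \<epsilon> = B"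
  shows "ereal c \<le> 2 * (enn2ereal A - enn2ereal B)"
proof -
  obtain L where L: "((\<lambda>\<epsilon>. enn2ereal (trunc_pos s w x \<epsilon>) - enn2ereal (trunc_neg s w x \<epsilon>)) \<longlongrightarrow> L) (at_right 0)"
    and c_le: "ereal c \<le> 2 * L"
    using assms(1) unfolding pv_ge_def by blast
  have "\<forall>\<^sub>F \<epsilon> in at_right 0. enn2ereal (trunc_pos s w x \<epsilon>) - enn2ereal (trunc_neg s w x \<epsilon>)
      \<le> enn2ereal A - enn2ereal B"
    using assms(2) by eventually_elim (auto intro!: ereal_minus_mono simp: less_eq_ennreal.rep_eq)
  then have "L \<le> enn2ereal A - enn2ereal B"
    by (rule tendsto_upperbound[OF L]) simp
  then have "2 * L \<le> 2 * (enn2ereal A - enn2ereal B)"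
    by (rule ereal_mult_left_mono) simp
  then show ?thesis
    using c_le by order
qed

lemma trunc_pos_le_measure_ball:
  fixes x :: "'a::euclidean_space"
  assumes "0 \<le> e" and "\<And>y. (w x - w y) * kern s x y \<le> e * indicator (ball x 1) y"
  shows "trunc_pos s w x \<epsilon> \<le> ennreal (e * measure lebesgue (ball x 1))"
proof -
  have "trunc_pos s w x \<epsilon> \<le> (\<integral>\<^sup>+ y. ennreal e * indicator (ball x 1) y \<partial>lebesgue)"
    unfolding trunc_pos_def
  proof (rule nn_integral_mono)
    fix y
    show "ennreal (max 0 ((w x - w y) * kern s x y)) * indicator {y. \<epsilon> < dist x y} y
        \<le> ennreal e * indicator (ball x 1) y"
      using assms(1) assms(2)[of y] by (auto simp: indicator_def max_def intro!: ennreal_leI)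
  qed
  also have "\<dots> = ennreal e * emeasure lebesgue (ball x 1)"
    by (rule nn_integral_cmult_indicator) simp
  also have "\<dots> = ennreal (e * measure lebesgue (ball x 1))"
    using assms(1) by (simp add: emeasure_eq_measure2 ennreal_mult)
  finally show ?thesis .
qed

lemma trunc_neg_eq_tail_integral:
  assumes "\<epsilon> < r" and min: "\<forall>y. u x \<le> u y" and "w x = u x"
    and "\<And>y. y \<in> ball x r \<Longrightarrow> w y \<le> w x" and "\<And>y. y \<notin> ball x r \<Longrightarrow> w y = u y"
  shows "trunc_neg s w x \<epsilon> = tail_integral s u x r"
  unfolding trunc_neg_def tail_integral_def
proof (rule nn_integral_cong)
  fix y
  have "(u x - u y) * kern s x y \<le> 0"
    using min by (simp add: mult_nonpos_nonneg)
  moreover have "(w y - w x) * kern s x y \<le> 0" if "y \<in> ball x r"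
    using assms(4)[OF that] by (simp add: mult_nonpos_nonneg)
  ultimately show "ennreal (max 0 (- ((w x - w y) * kern s x y))) * indicator {y. \<epsilon> < dist x y} y =
      ennreal ((u y - u x) * kern s x y) * indicator (- ball x r) y"
    using assms by (auto simp: indicator_def max_def algebra_simps)
qed

lemma visc_super_min_tail_integral_le_approx:
  fixes \<Omega> :: "'a::euclidean_space set"
  assumes "s \<le> 1" and visc: "visc_super s \<Omega> u f" and "x0 \<in> \<Omega>" and min: "\<forall>y. u x0 \<le> u y"
    and "0 < r" "r \<le> 1" "ball x0 r \<subseteq> \<Omega>" and "0 < e"
  shows "ereal (f x0) \<le>
    2 * (ereal (e * measure lebesgue (ball x0 1)) - enn2ereal (tail_integral s u x0 r))"
proof -
  define \<phi> where "\<phi> y = u x0 - e * inner (y - x0) (y - x0) ^ (DIM('a) + 1)" for y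
  define w where "w y = (if y \<in> ball x0 r then \<phi> y else u y)" for y
  have \<phi>_below: "\<phi> y < u y" if "y \<noteq> x0" for y
  proof -
    have "0 < e * inner (y - x0) (y - x0) ^ (DIM('a) + 1)"
      using that \<open>0 < e\<close> by simp
    then show ?thesis
      using min[rule_format, of y] unfolding \<phi>_def by linarith
  qed
  moreover have "\<phi> x0 = u x0"
    by (simp add: \<phi>_def)
  moreover from this have w_x0: "w x0 = u x0"
    using \<open>0 < r\<close> by (simp add: w_def)
  moreover have "C2_on (ball x0 r) \<phi>"
    unfolding \<phi>_def by (rule C2_on_const_minus_inner_self_power) simp
  ultimately have "pv_ge s w x0 (f x0)"
    using visc assms(3,5,7) unfolding visc_super_def w_def
    by (elim conjE ballE[of _ _ x0] allE[of _ "ball x0 r"] allE[of _ \<phi>]) auto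
  moreover have "(w x0 - w y) * kern s x0 y \<le> e * indicator (ball x0 1) y" for y
  proof (cases "y \<in> ball x0 r")
    case True
    then have "e * (inner (y - x0) (y - x0) ^ (DIM('a) + 1) * kern s x0 y) \<le> e * 1"
      using inner_self_power_kern_le_1[of x0 y s] assms(1,6) \<open>0 < e\<close> by simp
    then show ?thesis
      using True assms(5,6) by (simp add: w_def \<phi>_def algebra_simps)
  next
    case False
    then have "(w x0 - w y) * kern s x0 y \<le> 0"
      using min w_x0 by (simp add: w_def mult_nonpos_nonneg)
    then show ?thesis
      using \<open>0 < e\<close> by (simp add: order_trans)
  qed
  then have "trunc_pos s w x0 \<epsilon> \<le> ennreal (e * measure lebesgue (ball x0 1))" for \<epsilon>
    using \<open>0 < e\<close> by (intro trunc_pos_le_measure_ball) auto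
  moreover have "trunc_neg s w x0 \<epsilon> = tail_integral s u x0 r" if "\<epsilon> < r" for \<epsilon>
    using that min \<open>0 < r\<close> \<open>0 < e\<close>
    by (intro trunc_neg_eq_tail_integral) (auto simp: w_def \<phi>_def)
  ultimately have "ereal (f x0) \<le> 2 * (enn2ereal (ennreal (e * measure lebesgue (ball x0 1))) -
      enn2ereal (tail_integral s u x0 r))"
    using eventually_at_right_real[OF \<open>0 < r\<close>]
    by (intro pv_ge_le_of_eventually_bounds) (auto elim: eventually_mono)
  then show ?thesis
    using \<open>0 < e\<close> by simp
qed

lemma ereal_le_minus_two_enn2ereal_iff:
  "ereal c \<le> - 2 * enn2ereal T \<longleftrightarrow> c \<le> 0 \<and> T \<le> ennreal (- c / 2)"
proof (cases T)
  case (real t)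
  then show ?thesis by auto
qed (simp add: top_unique)

lemma visc_super_min_tail_integral_le:
  fixes \<Omega> :: "'a::euclidean_space set"
  assumes "s \<le> 1" "visc_super s \<Omega> u f" "x0 \<in> \<Omega>" "\<forall>y. u x0 \<le> u y"
    and "0 < r" "r \<le> 1" "ball x0 r \<subseteq> \<Omega>"
  shows "ereal (f x0) \<le> - 2 * enn2ereal (tail_integral s u x0 r)"
proof (rule ereal_le_epsilon2)
  fix \<delta> :: real
  assume "0 < \<delta>"
  define V where "V = measure lebesgue (ball x0 1)"
  define e where "e = \<delta> / (2 * (V + 1))"
  have "0 \<le> V"
    by (simp add: V_def)
  then have "0 < e" and "2 * (e * V) \<le> \<delta>"
    using \<open>0 < \<delta>\<close> by (auto simp: e_def field_simps)
  have "ereal (f x0) \<le> 2 * (ereal (e * V) - enn2ereal (tail_integral s u x0 r))"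
    unfolding V_def using assms \<open>0 < e\<close> by (rule visc_super_min_tail_integral_le_approx)
  also have "\<dots> \<le> - 2 * enn2ereal (tail_integral s u x0 r) + ereal \<delta>"
    using \<open>2 * (e * V) \<le> \<delta>\<close> by (cases "tail_integral s u x0 r") auto
  finally show "ereal (f x0) \<le> - 2 * enn2ereal (tail_integral s u x0 r) + ereal \<delta>" .
qed

lemma nn_integral_le_of_tail_bounds:
  fixes x :: "'a::metric_space" and h :: "'a \<Rightarrow> ennreal"
  assumes [measurable]: "h \<in> borel_measurable M" "\<And>r. - ball x r \<in> sets M"
    and "h x = 0" and "0 < r0"
    and tail_le: "\<And>r. 0 < r \<Longrightarrow> r \<le> r0 \<Longrightarrow> (\<integral>\<^sup>+ y. h y * indicator (- ball x r) y \<partial>M) \<le> C"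
  shows "integral\<^sup>N M h \<le> C"
proof -
  define g where "g j y = h y * indicator (- ball x (r0 / Suc j)) y" for j y
  have inc: "incseq g"
  proof (intro incseq_SucI le_funI)
    fix j y
    have "r0 / Suc (Suc j) \<le> r0 / Suc j"
      using \<open>0 < r0\<close> by (simp add: frac_le)
    then show "g j y \<le> g (Suc j) y"
      by (auto simp: g_def indicator_def)
  qed
  have SUP_g: "(SUP j. g j y) = h y" for y
  proof (cases "y = x")
    case False
    then have "0 < dist x y"
      by simp
    obtain j :: nat where "r0 / dist x y < j"
      using reals_Archimedean2 by blast
    then have "r0 < real j * dist x y"
      using pos_divide_less_eq[OF \<open>0 < dist x y\<close>] by blast
    also have "\<dots> \<le> real (Suc j) * dist x y"
      by (intro mult_right_mono) auto
    finally have "r0 / Suc j < dist x y"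
      by (simp add: pos_divide_less_eq mult.commute)
    then have "g j y = h y"
      by (simp add: g_def)
    moreover have "g i y \<le> h y" for i
      by (simp add: g_def indicator_def)
    ultimately show ?thesis
      by (metis SUP_upper UNIV_I SUP_least antisym)
  qed (simp add: g_def \<open>h x = 0\<close>)
  have "integral\<^sup>N M h = (\<integral>\<^sup>+ y. (SUP j. g j y) \<partial>M)"
    by (simp add: SUP_g)
  also have "\<dots> = (SUP j. integral\<^sup>N M (g j))"
    by (rule nn_integral_monotone_convergence_SUP[OF inc]) (unfold g_def, measurable)
  also have "\<dots> \<le> C"
    unfolding g_def[abs_def] using \<open>0 < r0\<close>
    by (auto intro!: SUP_least tail_le simp: divide_le_eq)
  finally show ?thesis .
qed

theorem lemma6p3:
  fixes s :: real and \<Omega> :: "'a::euclidean_space set"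
    and f :: "'a \<Rightarrow> real" and u :: "'a \<Rightarrow> real" and x0 :: 'a
  assumes "0 < s" "s < 1"
    and "bounded \<Omega>" "open \<Omega>"
    and "L1_2s s u"
    and "visc_super s \<Omega> u f"
    and "x0 \<in> \<Omega>" "\<forall>y. u x0 \<le> u y"
  shows "ereal (f x0) \<le>
    - 2 * enn2ereal (\<integral>\<^sup>+ y. ennreal ((u y - u x0) * kern s x0 y) \<partial>lebesgue)"
proof -
  have [measurable]: "u \<in> borel_measurable lebesgue"
    using assms(5) by (simp add: L1_2s_def)
  obtain r1 where "0 < r1" "ball x0 r1 \<subseteq> \<Omega>"
    using assms(4,7) open_contains_ball by blast
  define r0 where "r0 = min r1 1"
  have r0: "0 < r0" "r0 \<le> 1" "ball x0 r0 \<subseteq> \<Omega>"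
    using \<open>0 < r1\<close> \<open>ball x0 r1 \<subseteq> \<Omega>\<close> by (auto simp: r0_def)
  have "ereal (f x0) \<le> - 2 * enn2ereal (tail_integral s u x0 r)" if "0 < r" "r \<le> r0" for r
  proof (rule visc_super_min_tail_integral_le)
    show "ball x0 r \<subseteq> \<Omega>"
      using subset_ball[OF \<open>r \<le> r0\<close>] r0(3) by blast
  qed (use assms(2,6,7,8) r0 that in auto)
  then have tail_le: "f x0 \<le> 0 \<and> tail_integral s u x0 r \<le> ennreal (- f x0 / 2)"
    if "0 < r" "r \<le> r0" for r
    using that unfolding ereal_le_minus_two_enn2ereal_iff by blast
  have "(\<integral>\<^sup>+ y. ennreal ((u y - u x0) * kern s x0 y) \<partial>lebesgue) \<le> ennreal (- f x0 / 2)"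
  proof (rule nn_integral_le_of_tail_bounds[OF _ _ _ \<open>0 < r0\<close>])
    show "(\<lambda>y. ennreal ((u y - u x0) * kern s x0 y)) \<in> borel_measurable lebesgue"
      by measurable
  qed (use tail_le in \<open>auto simp: tail_integral_def\<close>)
  moreover have "f x0 \<le> 0"
    using tail_le r0 by blast
  ultimately show ?thesis
    unfolding ereal_le_minus_two_enn2ereal_iff by blast
qed

end
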